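(* For all $N\in\mathbb{N}$ and all $n\in\{0,1,\dots,N\}$ we have $\mathbf{1}_{\Omega^N_n}\|Y^N_n\|\le D^N_n$ pointwise on $\Omega$.
   Context: Standing setting: $T\in(0,\infty)$; $(\Omega,\mathcal{F},\mathbb{P})$ is a probability space with a normal filtration $(\mathcal{F}_t)_{t\in[0,T]}$; $d,m\in\mathbb{N}$; $W$ is an $m$-dimensional standard $(\mathcal{F}_t)$-Brownian motion; $\xi\colon\Omega\to\mathbb{R}^d$ is $\mathcal{F}_0$-measurable with $\mathbb{E}[\|\xi\|^p]<\infty$ for all $p\in[1,\infty)$. $\|\cdot\|$ is the Euclidean norm on vectors and the operator norm on matrices. $\mu\colon\mathbb{R}^d\to\mathbb{R}^d$ is $C^1$, $\sigma\colon\mathbb{R}^d\to\mathbb{R}^{d\times m}$, and there is $c\in(0,\infty)$ with $\|\mu'(x)\|\le c(1+\|x\|^c)$, $\|\sigma(x)-\sigma(y)\|\le c\|x-y\|$, $\langle x-y,\mu(x)-\mu(y)\rangle\le c\|x-y\|^2$ for all $x,y$. Let $\Delta W^N_n:=W_{(n+1)T/N}-W_{nT/N}$; tamed Euler scheme: $Y^N_0=\xi$, $Y^N_{n+1}=Y^N_n+\frac{(T/N)\mu(Y^N_n)}{1+(T/N)\|\mu(Y^N_n)\|}+\sigma(Y^N_n)\Delta W^N_n$ for $n\in\{0,\dots,N-1\}$. Let $\lambda:=(1+2c+T+\|\mu(0)\|+\|\sigma(0)\|)^4$, $\alpha^N_n:=\mathbf{1}_{\{\|Y^N_n\|\ge1\}}\big\langle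 \frac{Y^N_n}{\|Y^N_n\|},\frac{\sigma(Y^N_n)}{\|Y^N_n\|}\Delta W^N_n\big\rangle$ (defined as $0$ when $\|Y^N_n\|<1$), and $D^N_n:=(\lambda+\|\xi\|)\exp\big(\lambda+\sup_{u\in\{0,\dots,n\}}\sum_{k=u}^{n-1}[\lambda\|\Delta W^N_k\|^2+\alpha^N_k]\big)$ for $n\in\{0,\dots,N\}$ (empty sums are $0$). Let $\Omega^N_n:=\{\omega\in\Omega:\ \sup_{k\in\{0,\dots,n-1\}}D^N_k(\omega)\le N^{1/(2c)},\ \sup_{k\in\{0,\dots,n-1\}}\|\Delta W^N_k(\omega)\|\le1\}$, with $\Omega^N_0=\Omega$. *)

theory Defs
  imports "HOL-Analysis.Analysis"
begin

definition opnorm :: "real^'m^'d \<Rightarrow> real" where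
  "opnorm A = onorm (\<lambda>v. A *v v)"

definition dW :: "real \<Rightarrow> nat \<Rightarrow> (real \<Rightarrow> 'a \<Rightarrow> real^'m) \<Rightarrow> nat \<Rightarrow> 'a \<Rightarrow> real^'m" where
  "dW T N W n \<omega> = W (real (Suc n) * T / real N) \<omega> - W (real n * T / real N) \<omega>"

primrec tamedY :: "(real^'d \<Rightarrow> real^'d) \<Rightarrow> (real^'d \<Rightarrow> real^'m^'d) \<Rightarrow> real \<Rightarrow> nat
    \<Rightarrow> ('a \<Rightarrow> real^'d) \<Rightarrow> (real \<Rightarrow> 'a \<Rightarrow> real^'m) \<Rightarrow> nat \<Rightarrow> 'a \<Rightarrow> real^'d" where
  "tamedY \<mu> \<sigma> T N \<xi> W 0 \<omega> = \<xi> \<omega>"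
| "tamedY \<mu> \<sigma> T N \<xi> W (Suc n) \<omega> =
     (let y = tamedY \<mu> \<sigma> T N \<xi> W n \<omega>
      in y + ((T / real N) / (1 + (T / real N) * norm (\<mu> y))) *\<^sub>R \<mu> y
           + \<sigma> y *v dW T N W n \<omega>)"

definition lam :: "real \<Rightarrow> real \<Rightarrow> (real^'d \<Rightarrow> real^'d) \<Rightarrow> (real^'d \<Rightarrow> real^'m^'d) \<Rightarrow> real" where
  "lam c T \<mu> \<sigma> = (1 + 2 * c + T + norm (\<mu> 0) + opnorm (\<sigma> 0)) ^ 4"

definition alphaN :: "(real^'d \<Rightarrow> real^'d) \<Rightarrow> (real^'d \<Rightarrow> real^'m^'d) \<Rightarrow> real \<Rightarrow> nat
    \<Rightarrow> ('a \<Rightarrow> real^'d) \<Rightarrow> (real \<Rightarrow> 'a \<Rightarrow> real^'m) \<Rightarrow> nat \<Rightarrow> 'a \<Rightarrow> real" where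
  "alphaN \<mu> \<sigma> T N \<xi> W n \<omega> =
     (let y = tamedY \<mu> \<sigma> T N \<xi> W n \<omega>
      in if norm y \<ge> 1
         then ((1 / norm y) *\<^sub>R y) \<bullet> ((1 / norm y) *\<^sub>R (\<sigma> y *v dW T N W n \<omega>))
         else 0)"

definition DN :: "real \<Rightarrow> (real^'d \<Rightarrow> real^'d) \<Rightarrow> (real^'d \<Rightarrow> real^'m^'d) \<Rightarrow> real \<Rightarrow> nat
    \<Rightarrow> ('a \<Rightarrow> real^'d) \<Rightarrow> (real \<Rightarrow> 'a \<Rightarrow> real^'m) \<Rightarrow> nat \<Rightarrow> 'a \<Rightarrow> real" where
  "DN c \<mu> \<sigma> T N \<xi> W n \<omega> =
     (lam c T \<mu> \<sigma> + norm (\<xi> \<omega>)) *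
     exp (lam c T \<mu> \<sigma> +
          Max ((\<lambda>u. \<Sum>k\<in>{u..<n}. lam c T \<mu> \<sigma> * (norm (dW T N W k \<omega>))\<^sup>2
                                      + alphaN \<mu> \<sigma> T N \<xi> W k \<omega>) ` {0..n}))"

definition OmegaN :: "real \<Rightarrow> (real^'d \<Rightarrow> real^'d) \<Rightarrow> (real^'d \<Rightarrow> real^'m^'d) \<Rightarrow> real \<Rightarrow> nat
    \<Rightarrow> ('a \<Rightarrow> real^'d) \<Rightarrow> (real \<Rightarrow> 'a \<Rightarrow> real^'m) \<Rightarrow> nat \<Rightarrow> 'a set" where
  "OmegaN c \<mu> \<sigma> T N \<xi> W n =
     {\<omega>. (\<forall>k<n. DN c \<mu> \<sigma> T N \<xi> W k \<omega> \<le> real N powr (1 / (2 * c)))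
        \<and> (\<forall>k<n. norm (dW T N W k \<omega>) \<le> 1)}"

end

theory Submission
  imports Defs
begin

text \<open>
  Fix \<omega> and write P = \<lambda> + \<parallel>\<xi>\<parallel> and g_k = \<lambda>\<parallel>\<Delta>W_k\<parallel>^2 + \<alpha>_k.  One step of the tamed
  Euler scheme obeys a dichotomy on \<Omega>_{k+1}:
  \<^item> if \<parallel>Y_k\<parallel> < 1, then \<parallel>Y_{k+1}\<parallel> \<le> \<lambda> \<le> P (the bounded increment "restarts" the estimate);
  \<^item> if 1 \<le> \<parallel>Y_k\<parallel> \<le> N^(1/(2c)), then \<parallel>Y_{k+1}\<parallel> \<le> \<parallel>Y_k\<parallel> exp (\<lambda>/N + g_k), by expanding
    \<parallel>Y_{k+1}\<parallel>^2 and using the one-sided Lipschitz condition, the polynomial growth of \<mu>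
    (whose effect the size constraint N^(1/(2c)) neutralises) and linear growth of \<sigma>.
  By induction, on \<Omega>_n there is u \<le> n with \<parallel>Y_n\<parallel> \<le> P exp (\<Sum>_{u\<le>j<n} (\<lambda>/N + g_j)), and this
  quantity is at most D_n since the \<lambda>/N terms add up to at most \<lambda>.  The a-priori bound
  \<parallel>Y_k\<parallel> \<le> D_k \<le> N^(1/(2c)) needed in the large case is the statement itself at step k.
\<close>

lemma opnorm_mult_le: "norm (A *v v) \<le> opnorm A * norm v"
  unfolding opnorm_def by (rule onorm) simp

lemma opnorm_nonneg: "0 \<le> opnorm A"
  unfolding opnorm_def by (rule onorm_pos_le) simp

lemma lipschitz_matrix_growth:
  assumes "\<And>x y. opnorm (\<sigma> x - \<sigma> y) \<le> c * norm (x - y)"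
  shows "norm (\<sigma> y *v v) \<le> (opnorm (\<sigma> 0) + c * norm y) * norm v"
proof -
  have "\<sigma> y *v v = \<sigma> 0 *v v + (\<sigma> y - \<sigma> 0) *v v"
    by (simp add: matrix_vector_mult_diff_rdistrib)
  hence "norm (\<sigma> y *v v) \<le> norm (\<sigma> 0 *v v) + norm ((\<sigma> y - \<sigma> 0) *v v)"
    by (metis norm_triangle_ineq)
  also have "\<dots> \<le> opnorm (\<sigma> 0) * norm v + opnorm (\<sigma> y - \<sigma> 0) * norm v"
    by (intro add_mono opnorm_mult_le)
  also have "\<dots> \<le> opnorm (\<sigma> 0) * norm v + c * norm y * norm v"
    using assms[of y 0] by (intro add_mono mult_right_mono) auto
  finally show ?thesis by (simp add: algebra_simps)
qed

lemma polynomial_derivative_mvt: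
  fixes \<mu> :: "'a::real_normed_vector \<Rightarrow> 'b::real_normed_vector"
  assumes deriv: "\<And>x. (\<mu> has_derivative blinfun_apply (\<mu>' x)) (at x)"
    and growth: "\<And>x. norm (\<mu>' x) \<le> c * (1 + norm x powr c)"
    and c: "0 < c" and R: "norm y \<le> R"
  shows "norm (\<mu> y - \<mu> 0) \<le> c * (1 + R powr c) * norm y"
proof -
  have "norm (\<mu> y - \<mu> 0) \<le> c * (1 + R powr c) * norm (y - 0)"
  proof (rule differentiable_bound[where S="cball 0 R" and f'="\<lambda>x. blinfun_apply (\<mu>' x)"])
    show "(\<mu> has_derivative blinfun_apply (\<mu>' x)) (at x within cball 0 R)" for x
      using deriv has_derivative_at_withinI by blast
    show "onorm (blinfun_apply (\<mu>' x)) \<le> c * (1 + R powr c)" if "x \<in> cball 0 R" for x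
    proof -
      have "norm x powr c \<le> R powr c" using that c by (intro powr_mono2) auto
      thus ?thesis using growth[of x] c
        by (simp add: norm_blinfun.rep_eq[symmetric]) (smt (verit) mult_left_mono)
    qed
    show "0 \<in> cball (0::'a) R" using order_trans[OF norm_ge_zero R] by simp
  qed (use R in auto)
  thus ?thesis by simp
qed

text \<open>Expansion of \<parallel>y + g + s\<parallel>^2 keeping the cross terms with y, which carry the sign information.\<close>
lemma norm_sum3_sq_le:
  fixes y g s :: "'a::real_inner"
  shows "(norm (y + g + s))\<^sup>2 \<le> (norm y)\<^sup>2 + 2 * (y \<bullet> g) + 2 * (y \<bullet> s) + 2 * (norm g)\<^sup>2 + 2 * (norm s)\<^sup>2"
proof -
  have "0 \<le> (g - s) \<bullet> (g - s)" by simp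
  thus ?thesis
    by (simp add: power2_norm_eq_inner inner_add_left inner_add_right inner_diff_left
        inner_diff_right inner_commute algebra_simps)
qed

text \<open>
  Multiplicative one-step estimate for a tamed step y + h/(1 + h\<parallel>m\<parallel>) m + s away from the origin:
  the square of the new norm is bounded by \<parallel>y\<parallel>^2 (1 + 2x) \<le> \<parallel>y\<parallel>^2 e^(2x).
\<close>
lemma tamed_step_exp_bound:
  fixes y m s :: "'a::real_inner"
  assumes r: "1 \<le> norm y" and h: "0 < h"
    and drift_inner: "y \<bullet> m \<le> A * (norm y)\<^sup>2" "0 \<le> A"
    and drift_size: "h\<^sup>2 * (norm m)\<^sup>2 \<le> B * (norm y)\<^sup>2"
    and noise_size: "norm s \<le> C * norm y * w" "0 \<le> C" "0 \<le> w"
  shows "norm (y + (h / (1 + h * norm m)) *\<^sub>R m + s)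
     \<le> norm y * exp (h * A + B + C\<^sup>2 * w\<^sup>2 + (y \<bullet> s) / (norm y)\<^sup>2)"
proof -
  define h' where "h' = h / (1 + h * norm m)"
  define r where "r = norm y"
  define a where "a = (y \<bullet> s) / r\<^sup>2"
  define x where "x = h * A + B + C\<^sup>2 * w\<^sup>2 + a"
  have h'0: "0 \<le> h'" and h'h: "h' \<le> h"
    using h unfolding h'_def by (auto simp: divide_le_eq)
  have g1: "y \<bullet> (h' *\<^sub>R m) \<le> h * A * r\<^sup>2"
  proof -
    have "y \<bullet> (h' *\<^sub>R m) \<le> h' * (A * r\<^sup>2)"
      using drift_inner h'0 by (simp add: r_def mult_left_mono)
    also have "\<dots> \<le> h * (A * r\<^sup>2)" using h'h drift_inner by (intro mult_right_mono) auto
    finally show ?thesis by simp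
  qed
  have g2: "(norm (h' *\<^sub>R m))\<^sup>2 \<le> B * r\<^sup>2"
  proof -
    have "(norm (h' *\<^sub>R m))\<^sup>2 = h'\<^sup>2 * (norm m)\<^sup>2" by (simp add: power_mult_distrib)
    also have "\<dots> \<le> h\<^sup>2 * (norm m)\<^sup>2" using h'0 h'h by (intro mult_right_mono power_mono) auto
    finally show ?thesis using drift_size r_def by simp
  qed
  have s2: "(norm s)\<^sup>2 \<le> C\<^sup>2 * w\<^sup>2 * r\<^sup>2"
  proof -
    have "(norm s)\<^sup>2 \<le> (C * r * w)\<^sup>2" using noise_size by (intro power_mono) (auto simp: r_def)
    thus ?thesis by (simp add: power_mult_distrib mult_ac)
  qed
  have ys: "y \<bullet> s = r\<^sup>2 * a" using r by (simp add: r_def a_def)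
  have "(norm (y + h' *\<^sub>R m + s))\<^sup>2
      \<le> r\<^sup>2 + 2 * (y \<bullet> (h' *\<^sub>R m)) + 2 * (y \<bullet> s) + 2 * (norm (h' *\<^sub>R m))\<^sup>2 + 2 * (norm s)\<^sup>2"
    using norm_sum3_sq_le[of y "h' *\<^sub>R m" s] by (simp add: r_def)
  also have "\<dots> \<le> r\<^sup>2 + 2 * (h * A * r\<^sup>2) + 2 * (r\<^sup>2 * a) + 2 * (B * r\<^sup>2) + 2 * (C\<^sup>2 * w\<^sup>2 * r\<^sup>2)"
    using g1 g2 s2 ys by linarith
  also have "\<dots> = r\<^sup>2 * (1 + 2 * x)" unfolding x_def by algebra
  also have "\<dots> \<le> r\<^sup>2 * exp (2 * x)"
    using exp_ge_add_one_self[of "2 * x"] by (intro mult_left_mono) auto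
  also have "\<dots> = (r * exp x)\<^sup>2" unfolding exp_double power_mult_distrib ..
  finally have "(norm (y + h' *\<^sub>R m + s))\<^sup>2 \<le> (r * exp x)\<^sup>2" .
  hence "norm (y + h' *\<^sub>R m + s) \<le> r * exp x"
    by (rule power2_le_imp_le) (use r in \<open>simp add: r_def\<close>)
  thus ?thesis unfolding h'_def x_def a_def r_def .
qed

text \<open>
  The sum defining the exponent of D: the drift contributions \<lambda>/N over at most N steps
  add up to at most \<lambda>, and the remaining partial sum is dominated by the maximum over u.
\<close>
lemma partial_sum_le_Max:
  fixes b :: "nat \<Rightarrow> real"
  assumes "u \<le> n" "n \<le> N" "1 \<le> N" "0 \<le> L"
  shows "(\<Sum>j\<in>{u..<n}. L / real N + b j) \<le> L + Max ((\<lambda>u. \<Sum>k\<in>{u..<n}. b k) ` {0..n})"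
proof -
  have "real (n - u) * (L / real N) \<le> real N * (L / real N)"
    using assms by (intro mult_right_mono) auto
  also have "\<dots> = L" using assms by simp
  finally have drift: "real (n - u) * (L / real N) \<le> L" .
  have "(\<Sum>j\<in>{u..<n}. b j) \<le> Max ((\<lambda>u. \<Sum>k\<in>{u..<n}. b k) ` {0..n})"
    using assms by (intro Max_ge) auto
  with drift show ?thesis by (simp add: sum.distrib)
qed

lemma lambda_inequalities:
  fixes T c m0 s0 :: real
  assumes "0 < T" "0 < c" "0 \<le> m0" "0 \<le> s0"
  defines "L \<equiv> (1 + 2 * c + T + m0 + s0) ^ 4"
  shows "(s0 + c)\<^sup>2 \<le> L" "T * (c + m0) + T\<^sup>2 * (m0 + 2 * c)\<^sup>2 \<le> L"
    "1 + T * (m0 + 2 * c) + s0 + c \<le> L"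
proof -
  define a where "a = 1 + 2 * c + T + m0 + s0"
  define t where "t = T * (m0 + 2 * c)"
  have a1: "1 \<le> a" using assms by (simp add: a_def)
  have La: "L = (a\<^sup>2)\<^sup>2" by (simp add: L_def a_def flip: power_mult)
  have "1 \<le> a\<^sup>2" using a1 by (simp add: one_le_power)
  hence "a\<^sup>2 * 1 \<le> a\<^sup>2 * a\<^sup>2" by (intro mult_left_mono) auto
  hence a2: "a\<^sup>2 \<le> (a\<^sup>2)\<^sup>2" by (simp add: power2_eq_square)
  have t0: "0 \<le> t" using assms by (simp add: t_def)
  have a_sq: "a\<^sup>2 = (1 + t) + (T + s0 + 2 * c + m0 + (T\<^sup>2 + (m0 + 2 * c)\<^sup>2 + s0\<^sup>2
                  + 2 * T * s0 + 2 * (m0 + 2 * c) * s0 + T + s0 + 2 * c + m0 + t))"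
    by (simp add: a_def t_def power2_eq_square algebra_simps)
  have rest_nonneg: "0 \<le> T\<^sup>2 + (m0 + 2 * c)\<^sup>2 + s0\<^sup>2 + 2 * T * s0 + 2 * (m0 + 2 * c) * s0"
    using assms by simp
  have A1: "1 + 2 * t \<le> a\<^sup>2" and A3: "1 + t + s0 + c \<le> a\<^sup>2"
    using a_sq rest_nonneg t0 assms by linarith+
  show "(s0 + c)\<^sup>2 \<le> L"
  proof -
    have "(s0 + c)\<^sup>2 \<le> a\<^sup>2" using assms by (intro power_mono) (auto simp: a_def)
    thus ?thesis using a2 La by simp
  qed
  show "1 + T * (m0 + 2 * c) + s0 + c \<le> L" using A3 a2 La by (simp add: t_def)
  show "T * (c + m0) + T\<^sup>2 * (m0 + 2 * c)\<^sup>2 \<le> L"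
  proof -
    have "T * (c + m0) \<le> t" using assms by (simp add: t_def mult_left_mono)
    moreover have "T\<^sup>2 * (m0 + 2 * c)\<^sup>2 = t\<^sup>2" by (simp add: t_def power_mult_distrib)
    moreover have "t + t\<^sup>2 \<le> (1 + 2 * t)\<^sup>2" using t0 by (simp add: power2_eq_square algebra_simps)
    moreover have "(1 + 2 * t)\<^sup>2 \<le> (a\<^sup>2)\<^sup>2" using A1 t0 by (intro power_mono) auto
    ultimately show ?thesis using La by linarith
  qed
qed

section \<open>One-step estimates for the tamed Euler scheme\<close>

locale tamed_euler_coefficients =
  fixes T c :: real
    and \<mu> :: "real^'d \<Rightarrow> real^'d"
    and \<mu>' :: "real^'d \<Rightarrow> ((real^'d) \<Rightarrow>\<^sub>L (real^'d))"
    and \<sigma> :: "real^'d \<Rightarrow> real^'m^'d"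
  assumes T_pos: "0 < T"
    and c_pos: "0 < c"
    and mu_deriv: "\<And>x. (\<mu> has_derivative blinfun_apply (\<mu>' x)) (at x)"
    and mu'_growth: "\<And>x. norm (\<mu>' x) \<le> c * (1 + norm x powr c)"
    and sigma_lip: "\<And>x y. opnorm (\<sigma> x - \<sigma> y) \<le> c * norm (x - y)"
    and mu_mono: "\<And>x y. (x - y) \<bullet> (\<mu> x - \<mu> y) \<le> c * (norm (x - y))\<^sup>2"
begin

abbreviation "L \<equiv> lam c T \<mu> \<sigma>"
abbreviation "m0 \<equiv> norm (\<mu> 0)"
abbreviation "s0 \<equiv> opnorm (\<sigma> 0)"

lemma lambda_bounds:
  "(s0 + c)\<^sup>2 \<le> L" "T * (c + m0) + T\<^sup>2 * (m0 + 2 * c)\<^sup>2 \<le> L" "1 + T * (m0 + 2 * c) + s0 + c \<le> L"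
  "0 \<le> L"
  using lambda_inequalities[OF T_pos c_pos norm_ge_zero opnorm_nonneg[of "\<sigma> 0"]]
  by (simp_all add: lam_def)

definition tamed_step :: "nat \<Rightarrow> real^'d \<Rightarrow> real^'m \<Rightarrow> real^'d" where
  "tamed_step N y v = y + ((T / real N) / (1 + (T / real N) * norm (\<mu> y))) *\<^sub>R \<mu> y + \<sigma> y *v v"

lemma tamedY_Suc_step:
  "tamedY \<mu> \<sigma> T N \<xi> W (Suc k) \<omega> = tamed_step N (tamedY \<mu> \<sigma> T N \<xi> W k \<omega>) (dW T N W k \<omega>)"
  by (simp add: tamed_step_def Let_def)

lemma alphaN_eq:
  assumes "1 \<le> norm (tamedY \<mu> \<sigma> T N \<xi> W k \<omega>)"
  shows "alphaN \<mu> \<sigma> T N \<xi> W k \<omega> =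
    (let y = tamedY \<mu> \<sigma> T N \<xi> W k \<omega> in (y \<bullet> (\<sigma> y *v dW T N W k \<omega>)) / (norm y)\<^sup>2)"
  using assms by (simp add: alphaN_def Let_def power2_eq_square)

lemma drift_growth:
  assumes "1 \<le> norm y"
  shows "norm (\<mu> y) \<le> (m0 + 2 * c) * (norm y * norm y powr c)"
proof -
  define r where "r = norm y"
  define p where "p = r powr c"
  have r1: "1 \<le> r" and p1: "1 \<le> p"
    using assms c_pos by (auto simp: r_def p_def ge_one_powr_ge_zero)
  have rp1: "1 \<le> r * p" using mult_mono[OF r1 p1] r1 by simp
  have "norm (\<mu> y) \<le> m0 + c * (1 + p) * r"
    using polynomial_derivative_mvt[OF mu_deriv mu'_growth c_pos, of y r]
      norm_triangle_ineq2[of "\<mu> y" "\<mu> 0"] by (simp add: r_def p_def)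
  also have "\<dots> \<le> (m0 + 2 * c) * (r * p)"
  proof -
    have "m0 \<le> m0 * (r * p)" using rp1 by (simp add: mult_le_cancel_left1)
    moreover have "c * r \<le> c * (r * p)" using c_pos r1 p1 by (simp add: mult_le_cancel_left1)
    ultimately show ?thesis by (simp add: algebra_simps)
  qed
  finally show ?thesis by (simp add: r_def p_def)
qed

lemma drift_inner_bound:
  assumes "1 \<le> norm y"
  shows "y \<bullet> \<mu> y \<le> (c + m0) * (norm y)\<^sup>2"
proof -
  have "y \<bullet> \<mu> y = (y - 0) \<bullet> (\<mu> y - \<mu> 0) + y \<bullet> \<mu> 0" by (simp add: inner_diff_right)
  also have "\<dots> \<le> c * (norm y)\<^sup>2 + norm y * m0"
    using mu_mono[of y 0] norm_cauchy_schwarz[of y "\<mu> 0"] by simp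
  also have "norm y * m0 \<le> (norm y)\<^sup>2 * m0"
    using assms by (intro mult_right_mono) (auto simp: power2_eq_square mult_le_cancel_left1)
  finally show ?thesis by (simp add: algebra_simps)
qed

lemma step_large:
  assumes N: "1 \<le> N" and y1: "1 \<le> norm y" and yN: "norm y \<le> real N powr (1 / (2 * c))"
  shows "norm (tamed_step N y v)
    \<le> norm y * exp (L / real N + (L * (norm v)\<^sup>2 + (y \<bullet> (\<sigma> y *v v)) / (norm y)\<^sup>2))"
proof -
  define h where "h = T / real N"
  define q where "q = m0 + 2 * c"
  have Npos: "0 < real N" using N by simp
  have h0: "0 < h" using T_pos Npos by (simp add: h_def)
  have p2: "(norm y powr c)\<^sup>2 \<le> real N"
  proof -
    have "(norm y powr c)\<^sup>2 = norm y powr (2 * c)"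
      by (simp add: power2_eq_square powr_add[symmetric])
    also have "\<dots> \<le> (real N powr (1 / (2 * c))) powr (2 * c)"
      using y1 yN c_pos by (intro powr_mono2) auto
    also have "\<dots> = real N" using c_pos Npos by (simp add: powr_powr)
    finally show ?thesis .
  qed
  have drift_size: "h\<^sup>2 * (norm (\<mu> y))\<^sup>2 \<le> (T\<^sup>2 * q\<^sup>2 / real N) * (norm y)\<^sup>2"
  proof -
    have "(norm (\<mu> y))\<^sup>2 \<le> (q * (norm y * norm y powr c))\<^sup>2"
      using drift_growth[OF y1] by (intro power_mono) (auto simp: q_def)
    also have "\<dots> = q\<^sup>2 * (norm y)\<^sup>2 * (norm y powr c)\<^sup>2" by (simp add: power_mult_distrib)
    also have "\<dots> \<le> q\<^sup>2 * (norm y)\<^sup>2 * real N" using p2 by (intro mult_left_mono) auto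
    finally have "h\<^sup>2 * (norm (\<mu> y))\<^sup>2 \<le> h\<^sup>2 * (q\<^sup>2 * (norm y)\<^sup>2 * real N)"
      by (intro mult_left_mono) auto
    also have "\<dots> = (T\<^sup>2 * q\<^sup>2 / real N) * (norm y)\<^sup>2"
      using Npos by (simp add: h_def power2_eq_square field_simps)
    finally show ?thesis .
  qed
  have noise_size: "norm (\<sigma> y *v v) \<le> (s0 + c) * norm y * norm v"
  proof -
    have "s0 \<le> norm y * s0" using mult_right_mono[OF y1 opnorm_nonneg[of "\<sigma> 0"]] by simp
    hence "s0 + c * norm y \<le> (s0 + c) * norm y" by (simp add: algebra_simps)
    hence "(s0 + c * norm y) * norm v \<le> (s0 + c) * norm y * norm v" by (simp add: mult_right_mono)
    thus ?thesis using lipschitz_matrix_growth[OF sigma_lip, of y v] by simp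
  qed
  have "norm (tamed_step N y v)
     \<le> norm y * exp (h * (c + m0) + T\<^sup>2 * q\<^sup>2 / real N + (s0 + c)\<^sup>2 * (norm v)\<^sup>2
                      + (y \<bullet> (\<sigma> y *v v)) / (norm y)\<^sup>2)"
    unfolding tamed_step_def h_def[symmetric]
    by (rule tamed_step_exp_bound[OF y1 h0 drift_inner_bound[OF y1] _ drift_size noise_size])
      (use c_pos opnorm_nonneg[of "\<sigma> 0"] in auto)
  also have "\<dots> \<le> norm y * exp (L / real N + (L * (norm v)\<^sup>2 + (y \<bullet> (\<sigma> y *v v)) / (norm y)\<^sup>2))"
  proof -
    have "h * (c + m0) + T\<^sup>2 * q\<^sup>2 / real N = (T * (c + m0) + T\<^sup>2 * q\<^sup>2) / real N"
      by (simp add: h_def add_divide_distrib)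
    also have "\<dots> \<le> L / real N"
      using lambda_bounds(2) Npos by (intro divide_right_mono) (auto simp: q_def)
    finally have "h * (c + m0) + T\<^sup>2 * q\<^sup>2 / real N \<le> L / real N" .
    moreover have "(s0 + c)\<^sup>2 * (norm v)\<^sup>2 \<le> L * (norm v)\<^sup>2"
      using lambda_bounds(1) by (intro mult_right_mono) auto
    ultimately show ?thesis by (intro mult_left_mono) auto
  qed
  finally show ?thesis .
qed

lemma step_small:
  assumes N: "1 \<le> N" and y1: "norm y < 1" and v1: "norm v \<le> 1"
  shows "norm (tamed_step N y v) \<le> L"
proof -
  define h where "h = T / real N"
  have h0: "0 < h" and hT: "h \<le> T"
    using T_pos N by (auto simp: h_def divide_le_eq)
  have "norm (\<mu> y) \<le> m0 + 2 * c"
  proof -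
    have "norm (\<mu> y - \<mu> 0) \<le> c * (1 + 1 powr c) * norm y"
      using polynomial_derivative_mvt[OF mu_deriv mu'_growth c_pos, of y 1] y1 by simp
    also have "\<dots> \<le> 2 * c" using y1 c_pos by simp
    finally show ?thesis using norm_triangle_ineq2[of "\<mu> y" "\<mu> 0"] by simp
  qed
  hence drift: "norm ((h / (1 + h * norm (\<mu> y))) *\<^sub>R \<mu> y) \<le> T * (m0 + 2 * c)"
  proof -
    have "norm ((h / (1 + h * norm (\<mu> y))) *\<^sub>R \<mu> y) = h / (1 + h * norm (\<mu> y)) * norm (\<mu> y)"
      using h0 by simp
    also have "\<dots> \<le> h * norm (\<mu> y)"
      using h0 by (intro mult_right_mono) (auto simp: divide_le_eq)
    also have "\<dots> \<le> T * (m0 + 2 * c)"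
      using \<open>norm (\<mu> y) \<le> m0 + 2 * c\<close> hT h0 by (intro mult_mono) auto
    finally show ?thesis .
  qed
  have noise: "norm (\<sigma> y *v v) \<le> s0 + c"
  proof -
    have "(s0 + c * norm y) * norm v \<le> (s0 + c) * 1"
      using y1 v1 c_pos opnorm_nonneg[of "\<sigma> 0"] by (intro mult_mono) auto
    thus ?thesis using lipschitz_matrix_growth[OF sigma_lip, of y v] by simp
  qed
  have "norm (tamed_step N y v)
      \<le> norm y + norm ((h / (1 + h * norm (\<mu> y))) *\<^sub>R \<mu> y) + norm (\<sigma> y *v v)"
    unfolding tamed_step_def h_def[symmetric]
    using norm_triangle_ineq[of "y + (h / (1 + h * norm (\<mu> y))) *\<^sub>R \<mu> y" "\<sigma> y *v v"]
      norm_triangle_ineq[of y "(h / (1 + h * norm (\<mu> y))) *\<^sub>R \<mu> y"] by linarith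
  thus ?thesis using y1 drift noise lambda_bounds(3) by linarith
qed

section \<open>The restart invariant on \<Omega>_n\<close>

definition noise_exponent :: "nat \<Rightarrow> ('a \<Rightarrow> real^'d) \<Rightarrow> (real \<Rightarrow> 'a \<Rightarrow> real^'m) \<Rightarrow> nat \<Rightarrow> 'a \<Rightarrow> real"
  where "noise_exponent N \<xi> W k \<omega> = L * (norm (dW T N W k \<omega>))\<^sup>2 + alphaN \<mu> \<sigma> T N \<xi> W k \<omega>"

lemma restart_bound_le_DN:
  assumes "u \<le> n" "n \<le> N" "1 \<le> N"
    and Y: "norm (tamedY \<mu> \<sigma> T N \<xi> W n \<omega>)
              \<le> (L + norm (\<xi> \<omega>)) * exp (\<Sum>j\<in>{u..<n}. L / real N + noise_exponent N \<xi> W j \<omega>)"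
  shows "norm (tamedY \<mu> \<sigma> T N \<xi> W n \<omega>) \<le> DN c \<mu> \<sigma> T N \<xi> W n \<omega>"
proof -
  have "exp (\<Sum>j\<in>{u..<n}. L / real N + noise_exponent N \<xi> W j \<omega>)
        \<le> exp (L + Max ((\<lambda>u. \<Sum>j\<in>{u..<n}. noise_exponent N \<xi> W j \<omega>) ` {0..n}))"
    using partial_sum_le_Max[OF assms(1-3) lambda_bounds(4)] by simp
  hence "(L + norm (\<xi> \<omega>)) * exp (\<Sum>j\<in>{u..<n}. L / real N + noise_exponent N \<xi> W j \<omega>)
        \<le> DN c \<mu> \<sigma> T N \<xi> W n \<omega>"
    using lambda_bounds(4) by (simp add: DN_def noise_exponent_def mult_left_mono)
  with Y show ?thesis by linarith
qed

lemma OmegaN_SucD: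
  assumes "\<omega> \<in> OmegaN c \<mu> \<sigma> T N \<xi> W (Suc k)"
  shows "\<omega> \<in> OmegaN c \<mu> \<sigma> T N \<xi> W k" "DN c \<mu> \<sigma> T N \<xi> W k \<omega> \<le> real N powr (1 / (2 * c))"
    "norm (dW T N W k \<omega>) \<le> 1"
  using assms by (auto simp: OmegaN_def)

text \<open>
  On \<Omega>_n the norm of Y_n is bounded by P exp (\<Sum>_{u\<le>j<n} (\<lambda>/N + g_j)) for some restart
  time u \<le> n: a small state restarts the bound, a large state multiplies it.
\<close>
lemma restart_invariant:
  assumes N: "1 \<le> N"
  shows "n \<le> N \<Longrightarrow> \<omega> \<in> OmegaN c \<mu> \<sigma> T N \<xi> W n \<Longrightarrow> \<exists>u\<le>n. norm (tamedY \<mu> \<sigma> T N \<xi> W n \<omega>)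
           \<le> (L + norm (\<xi> \<omega>)) * exp (\<Sum>j\<in>{u..<n}. L / real N + noise_exponent N \<xi> W j \<omega>)"
proof (induction n)
  case 0
  show ?case using lambda_bounds(4) by auto
next
  case (Suc k)
  define P where "P = L + norm (\<xi> \<omega>)"
  define S where "S = (\<lambda>u. \<Sum>j\<in>{u..<k}. L / real N + noise_exponent N \<xi> W j \<omega>)"
  define y where "y = tamedY \<mu> \<sigma> T N \<xi> W k \<omega>"
  define v where "v = dW T N W k \<omega>"
  have Y_Suc: "tamedY \<mu> \<sigma> T N \<xi> W (Suc k) \<omega> = tamed_step N y v"
    unfolding y_def v_def by (rule tamedY_Suc_step)
  note \<Omega> = OmegaN_SucD[OF Suc.prems(2)]
  obtain u where u: "u \<le> k" "norm y \<le> P * exp (S u)"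
    using Suc.IH[OF _ \<Omega>(1)] Suc.prems(1) unfolding P_def S_def y_def by auto
  show ?case
  proof (cases "1 \<le> norm y")
    case True
    have "norm y \<le> DN c \<mu> \<sigma> T N \<xi> W k \<omega>"
      using restart_bound_le_DN[OF u(1) _ N] u(2) Suc.prems(1) unfolding P_def S_def y_def by simp
    with \<Omega>(2) have small: "norm y \<le> real N powr (1 / (2 * c))" by linarith
    have g: "noise_exponent N \<xi> W k \<omega> = L * (norm v)\<^sup>2 + (y \<bullet> (\<sigma> y *v v)) / (norm y)\<^sup>2"
      using alphaN_eq[OF True[unfolded y_def]] unfolding noise_exponent_def y_def v_def Let_def by simp
    have "norm (tamed_step N y v) \<le> norm y * exp (L / real N + noise_exponent N \<xi> W k \<omega>)"
      using step_large[OF N True small, of v] unfolding g .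
    also have "\<dots> \<le> P * exp (S u) * exp (L / real N + noise_exponent N \<xi> W k \<omega>)"
      using u(2) by (intro mult_right_mono) auto
    also have "\<dots> = P * exp (\<Sum>j\<in>{u..<Suc k}. L / real N + noise_exponent N \<xi> W j \<omega>)"
      using u(1) by (simp add: S_def sum.atLeastLessThan_Suc exp_add)
    finally show ?thesis using u(1) unfolding Y_Suc P_def by (intro exI[of _ u]) simp
  next
    case False
    have "norm (tamed_step N y v) \<le> P"
    proof -
      have "norm (tamed_step N y v) \<le> L" using step_small[OF N _ \<Omega>(3)[folded v_def]] False by simp
      thus ?thesis by (simp add: P_def add_increasing2)
    qed
    thus ?thesis unfolding Y_Suc P_def by (intro exI[of _ "Suc k"]) simp
  qed
qed

end

theorem lemma3p1:
  fixes T c :: real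
    and \<mu> :: "real^'d \<Rightarrow> real^'d"
    and \<mu>' :: "real^'d \<Rightarrow> ((real^'d) \<Rightarrow>\<^sub>L (real^'d))"
    and \<sigma> :: "real^'d \<Rightarrow> real^'m^'d"
    and \<xi> :: "'a \<Rightarrow> real^'d"
    and W :: "real \<Rightarrow> 'a \<Rightarrow> real^'m"
    and N n :: nat
  assumes T_pos: "0 < T"
    and c_pos: "0 < c"
    and mu_deriv: "\<And>x. (\<mu> has_derivative blinfun_apply (\<mu>' x)) (at x)"
    and mu_C1: "continuous_on UNIV \<mu>'"
    and mu'_growth: "\<And>x. norm (\<mu>' x) \<le> c * (1 + norm x powr c)"
    and sigma_lip: "\<And>x y. opnorm (\<sigma> x - \<sigma> y) \<le> c * norm (x - y)"
    and mu_mono: "\<And>x y. (x - y) \<bullet> (\<mu> x - \<mu> y) \<le> c * (norm (x - y))\<^sup>2"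
    and N_pos: "1 \<le> N"
    and n_le: "n \<le> N"
  shows "\<forall>\<omega>. indicator (OmegaN c \<mu> \<sigma> T N \<xi> W n) \<omega> * norm (tamedY \<mu> \<sigma> T N \<xi> W n \<omega>)
              \<le> DN c \<mu> \<sigma> T N \<xi> W n \<omega>"
proof
  interpret tamed_euler_coefficients T c \<mu> \<mu>' \<sigma>
    by unfold_locales (fact T_pos c_pos mu_deriv mu'_growth sigma_lip mu_mono)+
  fix \<omega>
  show "indicator (OmegaN c \<mu> \<sigma> T N \<xi> W n) \<omega> * norm (tamedY \<mu> \<sigma> T N \<xi> W n \<omega>)
          \<le> DN c \<mu> \<sigma> T N \<xi> W n \<omega>"
  proof (cases "\<omega> \<in> OmegaN c \<mu> \<sigma> T N \<xi> W n")
    case True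
    from restart_invariant[OF N_pos n_le True] obtain u where "u \<le> n" and "norm (tamedY \<mu> \<sigma> T N \<xi> W n \<omega>)
        \<le> (L + norm (\<xi> \<omega>)) * exp (\<Sum>j\<in>{u..<n}. L / real N + noise_exponent N \<xi> W j \<omega>)"
      by (elim exE conjE)
    hence "norm (tamedY \<mu> \<sigma> T N \<xi> W n \<omega>) \<le> DN c \<mu> \<sigma> T N \<xi> W n \<omega>"
      by (rule restart_bound_le_DN[OF _ n_le N_pos])
    with True show ?thesis by simp
  next
    case False
    have "0 \<le> DN c \<mu> \<sigma> T N \<xi> W n \<omega>" unfolding DN_def using lambda_bounds(4) by simp
    with False show ?thesis by simp
  qed
qed

end
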